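(* Let $n\ge 2$, let $\mathbf{e}_1,\dots,\mathbf{e}_n$ be the standard basis of $\mathbb{R}^n$, $\mathbf{v}_1=(1,\dots,1)^T$, and define $\mathbf{e}_i'=\frac{1-\sqrt{n+1}}{n}\mathbf{v}_1+\sqrt{n+1}\,\mathbf{e}_i$ for $i=1,\dots,n$. Then the lattice $\mathcal{L}\subset\mathbb{R}^n$ with basis $\{\mathbf{e}_1',\dots,\mathbf{e}_n'\}$ is tame, with Lagrangian basis $\{\mathbf{e}_i'\}$, vector $\mathbf{v}_1$, and $(a,h)=(n,1)$. Moreover, for every integer $r$ with $0<|r|<n$, $\mathcal{L}_{\mathbf{v}_1}^{(r,r)}$ is a sublattice of $\mathcal{L}$ with $\mathcal{L}_{\mathbf{v}_1}^{(r,r)}\cong|r|\sqrt{n+1}\,A_n$.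
   Context: Tame lattice: a full-rank lattice $\mathcal{L}\subset\mathbb{R}^n$ with a basis $\{\mathbf{e}_1,\dots,\mathbf{e}_n\}$ (Lagrangian basis) and nonzero $\mathbf{v}_1\in\mathcal{L}\cap\mathcal{L}^*$ such that $\sum_i\mathbf{e}_i=\mathbf{v}_1$, $\langle\mathbf{e}_i,\mathbf{v}_1\rangle=1$, $\langle\mathbf{e}_i,\mathbf{e}_i\rangle=a$, $\langle\mathbf{e}_i,\mathbf{e}_j\rangle=-h$ ($i\ne j$). $\mathcal{L}^{(r,s)}_{\mathbf{v}_1}$ is the image of $\mathcal{L}$ under $\mathbf{x}\mapsto r\mathbf{x}+s\langle\mathbf{x},\mathbf{v}_1\rangle\mathbf{v}_1$. $A_n=\{\mathbf{x}\in\mathbb{Z}^{n+1}:\sum_i x_i=0\}$. $\Lambda\cong\Lambda'$ means there is a linear isometry between the real spans carrying one lattice onto the other; $c\Lambda$ denotes scaling by $c>0$. *)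

theory Defs
  imports "HOL-Analysis.Analysis"
begin

definition lattice_gen :: "('i::finite \<Rightarrow> 'a::real_vector) \<Rightarrow> 'a set" where
  "lattice_gen b = {(\<Sum>i\<in>UNIV. of_int (k i) *\<^sub>R b i) | k. True}"

definition is_lattice_basis :: "(real^'n) set \<Rightarrow> ('n::finite \<Rightarrow> real^'n) \<Rightarrow> bool" where
  "is_lattice_basis L b \<longleftrightarrow> inj b \<and> independent (range b) \<and> L = lattice_gen b"

definition dual_lattice :: "('a::real_inner) set \<Rightarrow> 'a set" where
  "dual_lattice L = {x \<in> span L. \<forall>y\<in>L. inner x y \<in> \<int>}"

definition tame_wrt :: "(real^'n) set \<Rightarrow> ('n::finite \<Rightarrow> real^'n) \<Rightarrow> real^'n \<Rightarrow> real \<Rightarrow> real \<Rightarrow> bool" where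
  "tame_wrt L e v1 a h \<longleftrightarrow>
     is_lattice_basis L e \<and> v1 \<noteq> 0 \<and> v1 \<in> L \<inter> dual_lattice L \<and>
     (\<Sum>i\<in>UNIV. e i) = v1 \<and>
     (\<forall>i. inner (e i) v1 = 1) \<and>
     (\<forall>i. inner (e i) (e i) = a) \<and>
     (\<forall>i j. i \<noteq> j \<longrightarrow> inner (e i) (e j) = - h)"

definition lattice_rs :: "real \<Rightarrow> real \<Rightarrow> 'a::real_inner \<Rightarrow> 'a set \<Rightarrow> 'a set" where
  "lattice_rs r s v L = (\<lambda>x. r *\<^sub>R x + (s * inner x v) *\<^sub>R v) ` L"

text \<open>A_n realised in real^('n option), a type of cardinality CARD('n)+1.\<close>
definition A_lattice :: "(real^('n::finite option)) set" where
  "A_lattice = {x. (\<forall>i. x $ i \<in> \<int>) \<and> (\<Sum>i\<in>UNIV. x $ i) = 0}"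

definition scale_set :: "real \<Rightarrow> 'a::real_vector set \<Rightarrow> 'a set" where
  "scale_set c L = (\<lambda>x. c *\<^sub>R x) ` L"

definition lattice_iso :: "('a::real_inner) set \<Rightarrow> ('b::real_inner) set \<Rightarrow> bool" where
  "lattice_iso L M \<longleftrightarrow> (\<exists>f. linear f \<and> (\<forall>x\<in>span L. norm (f x) = norm x) \<and> f ` L = M)"

end

(*
  The Lagrangian vectors have the shape e'_i = c 1 + s e_i with N c + s = 1 and s^2 = N + 1,
  so their Gram matrix is N on the diagonal and -1 off it, and 1 = e'_1 + ... + e'_n.
  The map x |-> r x + r <x,1> 1 sends e'_i to r (e'_i + 1) = r (c + 1) 1 + r s e_i, which
  is an integral combination of the e'_i and again has the shape a 1 + b e_i; its Gram matrix
  r^2 (N + 1) (I + J) equals that of the basis |r| s (e_i - e_0) of |r| s A_n. Two lattice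
  bases with equal Gram matrices are related by a linear map that is isometric on their span.
*)
theory Submission
  imports Defs
begin

lemma lattice_gen_eq_range: "lattice_gen b = range (\<lambda>k. \<Sum>i\<in>UNIV. of_int (k i) *\<^sub>R b i)"
  unfolding lattice_gen_def by blast

lemma sum_mem_lattice_gen: "(\<Sum>i\<in>UNIV. b i) \<in> lattice_gen b"
  unfolding lattice_gen_eq_range by (rule range_eqI[where x="\<lambda>_. 1"]) simp

lemma linear_image_lattice_gen:
  assumes "linear f"
  shows "f ` lattice_gen b = lattice_gen (f \<circ> b)"
  unfolding lattice_gen_eq_range image_image
  by (simp add: linear_sum[OF assms] linear_scale[OF assms])

lemma scale_set_lattice_gen: "scale_set c (lattice_gen b) = lattice_gen (\<lambda>i. c *\<^sub>R b i)"
  unfolding scale_set_def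
  using linear_image_lattice_gen[of "scaleR c" b] by (simp add: o_def)

lemma lattice_gen_subset:
  assumes "\<And>i. b' i \<in> lattice_gen b"
  shows "lattice_gen b' \<subseteq> lattice_gen b"
proof
  fix x assume "x \<in> lattice_gen b'"
  then obtain k where x: "x = (\<Sum>i\<in>UNIV. of_int (k i) *\<^sub>R b' i)"
    unfolding lattice_gen_def by blast
  have "\<forall>i. \<exists>mi. b' i = (\<Sum>j\<in>UNIV. of_int (mi j) *\<^sub>R b j)"
    using assms unfolding lattice_gen_def by blast
  then obtain m where m: "\<And>i. b' i = (\<Sum>j\<in>UNIV. of_int (m i j) *\<^sub>R b j)"
    by metis
  have "x = (\<Sum>i\<in>UNIV. \<Sum>j\<in>UNIV. of_int (k i * m i j) *\<^sub>R b j)"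
    unfolding x m by (simp add: scaleR_sum_right)
  also have "\<dots> = (\<Sum>j\<in>UNIV. of_int (\<Sum>i\<in>UNIV. k i * m i j) *\<^sub>R b j)"
    by (subst sum.swap) (simp add: scaleR_sum_left)
  finally have "x = (\<Sum>j\<in>UNIV. of_int (\<Sum>i\<in>UNIV. k i * m i j) *\<^sub>R b j)" .
  then show "x \<in> lattice_gen b" unfolding lattice_gen_eq_range
    by (rule range_eqI[where x="\<lambda>j. \<Sum>i\<in>UNIV. k i * m i j"])
qed

lemma norm_preserving_on_span_if_gram_eq:
  fixes b :: "'i::finite \<Rightarrow> 'a::real_inner" and f :: "'a \<Rightarrow> 'b::real_inner"
  assumes "linear f" and "inj b"
    and gram: "\<And>i j. inner (f (b i)) (f (b j)) = inner (b i) (b j)"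
    and "x \<in> span (range b)"
  shows "norm (f x) = norm x"
proof -
  obtain u where "x = (\<Sum>v\<in>range b. u v *\<^sub>R v)"
    using assms(4) span_finite[of "range b"] by auto
  then have x: "x = (\<Sum>i\<in>UNIV. u (b i) *\<^sub>R b i)"
    by (simp add: sum.reindex[OF \<open>inj b\<close>])
  have "inner (f x) (f x) = inner x x"
    unfolding x by (simp add: linear_sum[OF assms(1)] linear_scale[OF assms(1)]
        inner_sum_left inner_sum_right gram)
  then show ?thesis by (simp add: norm_eq_sqrt_inner)
qed

lemma lattice_iso_if_gram_eq:
  fixes b :: "'i::finite \<Rightarrow> 'a::real_inner" and b' :: "'i \<Rightarrow> 'b::real_inner"
  assumes "inj b" and "independent (range b)"
    and gram: "\<And>i j. inner (b' i) (b' j) = inner (b i) (b j)"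
  shows "lattice_iso (lattice_gen b) (lattice_gen b')"
proof -
  obtain f where f: "linear f" "\<forall>x\<in>range b. f x = b' (inv b x)"
    using linear_independent_extend[OF assms(2), of "\<lambda>x. b' (inv b x)"] by blast
  then have fb: "f \<circ> b = b'" using \<open>inj b\<close> by (auto simp: inv_f_f)
  have "lattice_gen b \<subseteq> span (range b)"
    unfolding lattice_gen_def by (auto intro!: span_sum span_scale intro: span_base)
  then have "span (lattice_gen b) \<subseteq> span (range b)"
    using span_minimal[OF _ subspace_span] by blast
  moreover have "norm (f x) = norm x" if "x \<in> span (range b)" for x
    using norm_preserving_on_span_if_gram_eq[OF f(1) \<open>inj b\<close> _ that] gram
    by (simp add: fb[unfolded comp_def fun_eq_iff, rule_format])
  ultimately show ?thesis
    unfolding lattice_iso_def using f(1) linear_image_lattice_gen[OF f(1), of b] fb by blast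
qed

definition shifted_axis :: "real \<Rightarrow> real \<Rightarrow> 'n::finite \<Rightarrow> real^'n" where
  "shifted_axis \<alpha> \<sigma> i = \<alpha> *\<^sub>R (\<chi> _. 1) + \<sigma> *\<^sub>R axis i 1"

lemma shifted_axis_component: "shifted_axis \<alpha> \<sigma> i $ j = \<alpha> + (if j = i then \<sigma> else 0)"
  by (simp add: shifted_axis_def axis_def)

lemma sum_scaled_shifted_axis_component:
  "(\<Sum>j\<in>UNIV. g j *\<^sub>R shifted_axis \<alpha> \<sigma> j) $ i = \<alpha> * sum g UNIV + \<sigma> * g i"
  by (simp add: sum_component shifted_axis_component algebra_simps sum.distrib
      sum_distrib_left if_distrib[of "\<lambda>x. g _ * x"] cong: if_cong)

lemma inner_ones: "inner x (\<chi> _. 1 :: real^'n::finite) = (\<Sum>i\<in>UNIV. x $ i)"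
  by (simp add: inner_vec_def)

lemma inner_shifted_axis_ones:
  "inner (shifted_axis \<alpha> \<sigma> i) (\<chi> _. 1 :: real^'n::finite) = real CARD('n) * \<alpha> + \<sigma>"
  by (simp add: inner_ones shifted_axis_component sum.distrib)

lemma inner_sum_scaled_shifted_axis_ones:
  fixes g :: "'n::finite \<Rightarrow> real"
  shows "inner (\<Sum>j\<in>UNIV. g j *\<^sub>R shifted_axis \<alpha> \<sigma> j) (\<chi> _. 1 :: real^'n)
     = (real CARD('n) * \<alpha> + \<sigma>) * sum g UNIV"
  unfolding inner_ones sum_scaled_shifted_axis_component
  by (simp add: sum.distrib sum_distrib_left[symmetric] algebra_simps)

lemma sum_shifted_axis:
  "(\<Sum>i\<in>UNIV. shifted_axis \<alpha> \<sigma> i)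
     = (real CARD('n) * \<alpha> + \<sigma>) *\<^sub>R (\<chi> _. 1 :: real^'n::finite)"
  using sum_scaled_shifted_axis_component[of "\<lambda>_. 1 :: real" \<alpha> \<sigma> "_ :: 'n"]
  by (simp add: vec_eq_iff algebra_simps)

lemma inner_shifted_axis:
  "inner (shifted_axis \<alpha> \<sigma> i) (shifted_axis \<alpha> \<sigma> j :: real^'n::finite)
     = real CARD('n) * \<alpha>\<^sup>2 + 2 * \<alpha> * \<sigma> + (if i = j then \<sigma>\<^sup>2 else 0)"
  by (simp add: inner_vec_def shifted_axis_component algebra_simps power2_eq_square
      sum.distrib if_distrib[of "\<lambda>x. x * _"] if_distrib[of "\<lambda>x. _ * x"] cong: if_cong)

lemma inj_shifted_axis:
  assumes "\<sigma> \<noteq> 0"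
  shows "inj (shifted_axis \<alpha> \<sigma>)"
proof (rule injI)
  fix i j assume "shifted_axis \<alpha> \<sigma> i = shifted_axis \<alpha> \<sigma> j"
  then have "shifted_axis \<alpha> \<sigma> i $ i = shifted_axis \<alpha> \<sigma> j $ i" by simp
  then show "i = j" using assms by (simp add: shifted_axis_component split: if_splits)
qed

lemma independent_shifted_axis:
  fixes \<alpha> \<sigma> :: real
  assumes "\<sigma> \<noteq> 0" and "real CARD('n::finite) * \<alpha> + \<sigma> \<noteq> 0"
  shows "independent (range (shifted_axis \<alpha> \<sigma> :: 'n \<Rightarrow> real^'n))"
proof (rule independent_if_scalars_zero)
  fix f :: "real^'n \<Rightarrow> real" and x :: "real^'n"
  assume zero: "(\<Sum>x\<in>range (shifted_axis \<alpha> \<sigma>). f x *\<^sub>R x) = 0"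
    and "x \<in> range (shifted_axis \<alpha> \<sigma>)"
  then obtain j where x: "x = shifted_axis \<alpha> \<sigma> j" by auto
  define g :: "'n \<Rightarrow> real" where "g i = f (shifted_axis \<alpha> \<sigma> i)" for i
  have comb: "(\<Sum>i\<in>UNIV. g i *\<^sub>R shifted_axis \<alpha> \<sigma> i) = 0"
    using zero by (simp add: sum.reindex[OF inj_shifted_axis[OF assms(1)]] g_def)
  then have "sum g UNIV = 0"
    using inner_sum_scaled_shifted_axis_ones[of g \<alpha> \<sigma>] assms(2) by simp
  moreover have "(\<Sum>i\<in>UNIV. g i *\<^sub>R shifted_axis \<alpha> \<sigma> i) $ j = 0"
    using comb by (simp del: sum_component)
  then have "\<alpha> * sum g UNIV + \<sigma> * g j = 0"
    unfolding sum_scaled_shifted_axis_component .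
  ultimately show "f x = 0" using assms(1) by (simp add: x g_def)
qed simp

definition A_root :: "'n::finite \<Rightarrow> real^('n option)" where
  "A_root i = axis (Some i) 1 - axis None 1"

lemma sum_UNIV_option:
  "(\<Sum>p\<in>(UNIV::'a::finite option set). f p) = f None + (\<Sum>i\<in>UNIV. f (Some i))"
  by (simp add: UNIV_option_conv sum.reindex)

lemma sum_scaled_A_root_component:
  "(\<Sum>i\<in>UNIV. g i *\<^sub>R A_root i) $ p
     = (case p of None \<Rightarrow> - sum g UNIV | Some i \<Rightarrow> g i)"
  by (cases p) (simp_all add: sum_component A_root_def axis_def sum_negf
      if_distrib[of "\<lambda>x. g _ * x"] cong: if_cong)

lemma A_lattice_eq_lattice_gen: "A_lattice = lattice_gen (A_root :: 'n::finite \<Rightarrow> _)"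
proof (intro set_eqI iffI)
  fix a :: "real^('n option)"
  assume "a \<in> A_lattice"
  then have int: "\<And>p. a $ p \<in> \<int>" and zero: "(\<Sum>p\<in>UNIV. a $ p) = 0"
    by (auto simp: A_lattice_def)
  define k where "k i = \<lfloor>a $ Some i\<rfloor>" for i
  have k: "of_int (k i) = a $ Some i" for i
    using int[of "Some i"] by (metis Ints_cases floor_of_int k_def)
  have "(\<Sum>i\<in>UNIV. of_int (k i) *\<^sub>R A_root i) $ p = a $ p" for p
    unfolding sum_scaled_A_root_component using zero
    by (cases p) (simp_all add: k sum_UNIV_option eq_neg_iff_add_eq_0)
  then show "a \<in> lattice_gen A_root"
    unfolding lattice_gen_eq_range by (intro range_eqI[where x=k]) (simp add: vec_eq_iff)
next
  fix a :: "real^('n option)"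
  assume "a \<in> lattice_gen A_root"
  then obtain k where "a = (\<Sum>i\<in>UNIV. of_int (k i) *\<^sub>R A_root i)"
    unfolding lattice_gen_def by blast
  then have a: "a $ p = (case p of None \<Rightarrow> - (\<Sum>i\<in>UNIV. of_int (k i))
                                | Some i \<Rightarrow> of_int (k i))" for p
    by (simp only: sum_scaled_A_root_component)
  show "a \<in> A_lattice"
    unfolding A_lattice_def by (auto simp: a sum_UNIV_option Ints_sum split: option.split)
qed

lemma inner_A_root: "inner (A_root i) (A_root j) = 1 + (if i = j then 1 else 0)"
  by (simp add: A_root_def inner_diff_left inner_diff_right inner_axis_axis)

lemma shifted_axis_gram_identities:
  fixes N c s :: real
  assumes trace: "N * c + s = 1" and norm: "s\<^sup>2 = N + 1" and "N \<noteq> 0"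
  shows "N * c\<^sup>2 + 2 * c * s = -1" and "N * (c + 1)\<^sup>2 + 2 * (c + 1) * s = N + 1"
proof -
  have "N * c = 1 - s" using trace by simp
  then have "N * (c * (1 + s)) = (1 - s) * (1 + s)" by (simp add: mult.assoc[symmetric])
  also have "\<dots> = N * -1" using norm by (simp add: algebra_simps power2_eq_square)
  finally have "c * (1 + s) = -1" using mult_left_cancel[OF \<open>N \<noteq> 0\<close>] by blast
  moreover have "N * c\<^sup>2 + 2 * c * s = c * (N * c + s) + c * s"
    by (simp add: algebra_simps power2_eq_square)
  ultimately show first: "N * c\<^sup>2 + 2 * c * s = -1"
    unfolding trace by (simp add: algebra_simps)
  have "N * (c + 1)\<^sup>2 + 2 * (c + 1) * s = (N * c\<^sup>2 + 2 * c * s) + 2 * (N * c + s) + N"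
    by (simp add: algebra_simps power2_eq_square)
  then show "N * (c + 1)\<^sup>2 + 2 * (c + 1) * s = N + 1" using first trace by simp
qed

lemma tame_wrt_shifted_axis:
  fixes c s :: real
  assumes trace: "real CARD('n) * c + s = 1" and norm: "s\<^sup>2 = real CARD('n) + 1"
  shows "tame_wrt (lattice_gen (shifted_axis c s)) (shifted_axis c s :: 'n::finite \<Rightarrow> real^'n)
           (\<chi> _. 1) (real CARD('n)) 1"
proof -
  let ?e = "shifted_axis c s :: 'n \<Rightarrow> real^'n" and ?v = "\<chi> _. 1 :: real^'n"
  have "s \<noteq> 0" using norm by auto
  then have "independent (range ?e)"
    using trace by (intro independent_shifted_axis) simp_all
  have sum_e: "(\<Sum>i\<in>UNIV. ?e i) = ?v" using sum_shifted_axis[of c s, where 'n='n] trace by simp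
  have "?v \<noteq> 0" by (simp add: vec_eq_iff)
  moreover have "?v \<in> lattice_gen ?e" using sum_mem_lattice_gen[of ?e] sum_e by simp
  moreover have "inner ?v y \<in> \<int>" if y: "y \<in> lattice_gen ?e" for y
  proof -
    obtain k where "y = (\<Sum>i\<in>UNIV. of_int (k i) *\<^sub>R ?e i)"
      using y unfolding lattice_gen_def by blast
    then have "inner ?v y = (\<Sum>i\<in>UNIV. of_int (k i))"
      using inner_sum_scaled_shifted_axis_ones[of "\<lambda>i. of_int (k i)" c s] trace
      by (simp add: inner_commute)
    then show ?thesis by (simp add: Ints_sum)
  qed
  moreover have "inner (?e i) ?v = 1" for i
    using trace by (simp add: inner_shifted_axis_ones)
  moreover have "inner (?e i) (?e j) = (if i = j then real CARD('n) else -1)" for i j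
    using shifted_axis_gram_identities[OF trace norm] norm by (simp add: inner_shifted_axis)
  ultimately show ?thesis
    unfolding tame_wrt_def is_lattice_basis_def dual_lattice_def
    using inj_shifted_axis[OF \<open>s \<noteq> 0\<close>] \<open>independent (range ?e)\<close> sum_e
    by (auto intro: span_base)
qed

lemma lattice_rs_shifted_axis:
  fixes c s r :: real
  assumes trace: "real CARD('n) * c + s = 1"
  shows "lattice_rs r r (\<chi> _. 1) (lattice_gen (shifted_axis c s :: 'n::finite \<Rightarrow> real^'n))
           = lattice_gen (shifted_axis (r * (c + 1)) (r * s))"
proof -
  let ?v = "\<chi> _. 1 :: real^'n"
  have lin: "linear (\<lambda>x. r *\<^sub>R x + (r * inner x ?v) *\<^sub>R ?v)"
    by (rule linearI) (simp_all add: algebra_simps inner_add_left)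
  have "inner (shifted_axis c s i) ?v = 1" for i
    using trace by (simp add: inner_shifted_axis_ones)
  then have "r *\<^sub>R shifted_axis c s i + (r * inner (shifted_axis c s i) ?v) *\<^sub>R ?v
          = shifted_axis (r * (c + 1)) (r * s) i" for i
    by (simp add: shifted_axis_def algebra_simps)
  then show ?thesis
    unfolding lattice_rs_def linear_image_lattice_gen[OF lin] by (simp add: o_def)
qed

lemma shifted_axis_sublattice:
  fixes c s :: real and r :: int
  assumes trace: "real CARD('n) * c + s = 1"
  shows "lattice_gen (shifted_axis (of_int r * (c + 1)) (of_int r * s))
           \<subseteq> lattice_gen (shifted_axis c s :: 'n::finite \<Rightarrow> real^'n)"
proof (rule lattice_gen_subset)
  fix i :: 'n
  define k :: "'n \<Rightarrow> int" where "k j = r + (if j = i then r else 0)" for j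
  have sum_k: "(\<Sum>j\<in>UNIV. real_of_int (k j)) = of_int r * (1 + real CARD('n))"
    by (simp add: k_def sum.distrib if_distrib[of real_of_int] algebra_simps cong: if_cong)
  have "shifted_axis (of_int r * (c + 1)) (of_int r * s) i $ l
        = (\<Sum>j\<in>UNIV. of_int (k j) *\<^sub>R shifted_axis c s j) $ l" for l
  proof -
    have "of_int r * (real CARD('n) * c + s) = real_of_int r" using trace by simp
    then show ?thesis
      unfolding sum_scaled_shifted_axis_component sum_k shifted_axis_component
      by (cases "l = i") (simp_all add: k_def algebra_simps)
  qed
  then have "shifted_axis (of_int r * (c + 1)) (of_int r * s) i
      = (\<Sum>j\<in>UNIV. of_int (k j) *\<^sub>R shifted_axis c s j)"
    by (simp add: vec_eq_iff del: sum_component)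
  then show "shifted_axis (of_int r * (c + 1)) (of_int r * s) i \<in> lattice_gen (shifted_axis c s)"
    unfolding lattice_gen_eq_range by (rule range_eqI[where x=k])
qed

lemma shifted_axis_lattice_iso_scaled_A_lattice:
  fixes c s r :: real
  assumes trace: "real CARD('n) * c + s = 1" and norm: "s\<^sup>2 = real CARD('n) + 1" and "r \<noteq> 0"
  shows "lattice_iso (lattice_gen (shifted_axis (r * (c + 1)) (r * s) :: 'n::finite \<Rightarrow> real^'n))
           (scale_set (\<bar>r\<bar> * s) (A_lattice :: (real^('n option)) set))"
proof -
  have "s \<noteq> 0" using norm by auto
  have "real CARD('n) * (r * (c + 1)) + r * s
      = r * (real CARD('n) * c + s) + r * real CARD('n)"
    by (simp add: algebra_simps)
  then have "real CARD('n) * (r * (c + 1)) + r * s = r * (real CARD('n) + 1)"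
    unfolding trace by (simp add: algebra_simps)
  then have "real CARD('n) * (r * (c + 1)) + r * s \<noteq> 0"
    using \<open>r \<noteq> 0\<close> by (simp add: add_nonneg_eq_0_iff)
  moreover have "inner ((\<bar>r\<bar> * s) *\<^sub>R A_root i) ((\<bar>r\<bar> * s) *\<^sub>R A_root j)
      = inner (shifted_axis (r * (c + 1)) (r * s) i)
          (shifted_axis (r * (c + 1)) (r * s) j :: real^'n)" for i j
  proof -
    let ?\<delta> = "if i = j then 1 else 0 :: real"
    have "inner ((\<bar>r\<bar> * s) *\<^sub>R A_root i) ((\<bar>r\<bar> * s) *\<^sub>R A_root j)
        = (\<bar>r\<bar> * s)\<^sup>2 * inner (A_root i) (A_root j)"
      by (simp add: power2_eq_square)
    also have "\<dots> = r\<^sup>2 * (real CARD('n) + 1) * (1 + ?\<delta>)"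
      using norm by (simp add: inner_A_root power_mult_distrib)
    also have "\<dots> = r\<^sup>2 * (real CARD('n) * (c + 1)\<^sup>2 + 2 * (c + 1) * s) + r\<^sup>2 * s\<^sup>2 * ?\<delta>"
      using shifted_axis_gram_identities(2)[OF trace norm] norm by (simp add: algebra_simps)
    also have "\<dots> = inner (shifted_axis (r * (c + 1)) (r * s) i)
        (shifted_axis (r * (c + 1)) (r * s) j)"
      by (simp add: inner_shifted_axis algebra_simps power2_eq_square)
    finally show ?thesis .
  qed
  ultimately show ?thesis
    unfolding A_lattice_eq_lattice_gen scale_set_lattice_gen
    using \<open>s \<noteq> 0\<close> \<open>r \<noteq> 0\<close>
    by (intro lattice_iso_if_gram_eq inj_shifted_axis independent_shifted_axis) auto
qed

theorem mainTheorem8: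
  fixes L :: "(real^'n::finite) set" and v1 :: "real^'n" and e' :: "'n \<Rightarrow> real^'n"
  assumes "CARD('n) \<ge> 2"
    and "v1 = (\<chi> i. 1)"
    and "\<And>i. e' i = ((1 - sqrt (real CARD('n) + 1)) / real CARD('n)) *\<^sub>R v1
                     + sqrt (real CARD('n) + 1) *\<^sub>R axis i 1"
    and "L = lattice_gen e'"
  shows "tame_wrt L e' v1 (real CARD('n)) 1 \<and>
    (\<forall>r::int. 0 < \<bar>r\<bar> \<and> \<bar>r\<bar> < int CARD('n) \<longrightarrow>
       lattice_rs (of_int r) (of_int r) v1 L \<subseteq> L \<and>
       lattice_iso (lattice_rs (of_int r) (of_int r) v1 L)
         (scale_set (of_int \<bar>r\<bar> * sqrt (real CARD('n) + 1)) (A_lattice :: (real^('n option)) set)))"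
proof -
  define s where "s = sqrt (real CARD('n) + 1)"
  define c where "c = (1 - s) / real CARD('n)"
  have trace: "real CARD('n) * c + s = 1" by (simp add: c_def)
  have norm: "s\<^sup>2 = real CARD('n) + 1" by (simp add: s_def)
  have e': "e' = shifted_axis c s"
    using assms(2,3) by (simp add: fun_eq_iff shifted_axis_def c_def s_def)
  have "tame_wrt L e' v1 (real CARD('n)) 1"
    using tame_wrt_shifted_axis[OF trace norm] by (simp add: assms(2,4) e')
  moreover have "lattice_rs (of_int r) (of_int r) v1 L \<subseteq> L \<and>
       lattice_iso (lattice_rs (of_int r) (of_int r) v1 L)
         (scale_set (of_int \<bar>r\<bar> * s) (A_lattice :: (real^('n option)) set))"
    if "r \<noteq> 0" for r :: int
  proof -
    have rs: "lattice_rs (of_int r) (of_int r) v1 L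
        = lattice_gen (shifted_axis (of_int r * (c + 1)) (of_int r * s))"
      using lattice_rs_shifted_axis[OF trace] by (simp add: assms(2,4) e')
    show ?thesis
      unfolding rs using shifted_axis_sublattice[OF trace, of r]
        shifted_axis_lattice_iso_scaled_A_lattice[OF trace norm, of "of_int r"] that
      by (simp add: assms(4) e')
  qed
  ultimately show ?thesis by (auto simp: s_def)
qed

end
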